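(* Let $G=(V,E)$ be a graph whose edge set can be decomposed into the edge set of a spanning bipartite subgraph $H'$ of $G$ with no connected component consisting of a single edge and a set $M'$ of edges forming a matching. Then $G$ admits a partial edge colouring with $16$ colours such that all edges of $G$ are satisfied.
   Context: For an edge $e=uv$, $E[e]$ is the set of edges incident with $u$ or $v$ and $E(e)=E[e]\setminus\{e\}$. In a partial edge colouring (not all edges need be coloured), a colour $\alpha$ is unique for $e$ if $\alpha$ appears on some edge $e'\in E(e)$ and on no other edge of $E[e]\setminus\{e'\}$; $e$ is satisfied if such a colour exists. "Spanning" means $V(H')=V$; here $H'$ is assumed to have no isolated vertices (every vertex of $V$ lies in a component of $H'$ with at least two edges). *)

theory Defs
  imports Main
begin

definition simple_graph :: "'a set \<Rightarrow> 'a set set \<Rightarrow> bool" where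
  "simple_graph V E \<longleftrightarrow> finite V \<and>
     (\<forall>e\<in>E. \<exists>x y. e = {x, y} \<and> x \<noteq> y \<and> x \<in> V \<and> y \<in> V)"

definition closed_nbhd :: "'a set set \<Rightarrow> 'a set \<Rightarrow> 'a set set" where
  "closed_nbhd E e = {f \<in> E. f \<inter> e \<noteq> {}}"

definition open_nbhd :: "'a set set \<Rightarrow> 'a set \<Rightarrow> 'a set set" where
  "open_nbhd E e = closed_nbhd E e - {e}"

text \<open>A partial edge colouring is c :: edge \<Rightarrow> colour option (None = uncoloured).\<close>
definition unique_colour :: "'a set set \<Rightarrow> ('a set \<Rightarrow> nat option) \<Rightarrow> 'a set \<Rightarrow> nat \<Rightarrow> bool" where
  "unique_colour E c e \<alpha> \<longleftrightarrow>
     (\<exists>e'\<in>open_nbhd E e. c e' = Some \<alpha> \<and>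
        (\<forall>e''\<in>closed_nbhd E e - {e'}. c e'' \<noteq> Some \<alpha>))"

definition satisfied :: "'a set set \<Rightarrow> ('a set \<Rightarrow> nat option) \<Rightarrow> 'a set \<Rightarrow> bool" where
  "satisfied E c e \<longleftrightarrow> (\<exists>\<alpha>. unique_colour E c e \<alpha>)"

definition partial_edge_colouring :: "'a set set \<Rightarrow> nat \<Rightarrow> ('a set \<Rightarrow> nat option) \<Rightarrow> bool" where
  "partial_edge_colouring E k c \<longleftrightarrow> (\<forall>e\<in>E. \<forall>\<alpha>. c e = Some \<alpha> \<longrightarrow> \<alpha> < k)"

definition matching :: "'a set set \<Rightarrow> bool" where
  "matching M \<longleftrightarrow> (\<forall>e\<in>M. \<forall>f\<in>M. e \<noteq> f \<longrightarrow> e \<inter> f = {})"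

definition bipartite :: "'a set \<Rightarrow> 'a set set \<Rightarrow> bool" where
  "bipartite V E \<longleftrightarrow> (\<exists>A \<subseteq> V. \<forall>e\<in>E. \<exists>x y. e = {x, y} \<and> x \<in> A \<and> y \<in> V - A)"

definition adjacent :: "'a set set \<Rightarrow> 'a \<Rightarrow> 'a \<Rightarrow> bool" where
  "adjacent E x y \<longleftrightarrow> {x, y} \<in> E \<and> x \<noteq> y"

definition component_edges :: "'a set set \<Rightarrow> 'a \<Rightarrow> 'a set set" where
  "component_edges E v = {e \<in> E. \<exists>u\<in>e. (adjacent E)\<^sup>*\<^sup>* v u}"

end

theory Submission
  imports Defs
begin

(*
  Root every component of H at a vertex with two neighbours and take a breadth-first spanning
  forest; as H is bipartite, the depths of adjacent vertices differ by exactly one. Only forest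
  edges are coloured: the edge from w to its parent gets colour 2 * slot w + [w marked], where
  the marks tell the two ends of each matching edge apart. A vertex of depth at least 2 has slot
  depth mod 3; the two designated children of a root r have slots 3 + [r marked] and
  5 + [r marked], and all other children of roots share the spare slot 7.

  An H-edge xy with y one level below x is satisfied by the forest edge above x, because every
  other coloured edge at x or y hangs one or two levels lower; if x is a root, a designated child
  edge of x other than xy takes this role. A matching edge uv is satisfied by the forest edge
  above u or the one above v: the marks separate these two edges, and the residues mod 3 cannot
  obstruct both choices. If u is a root, one of its two designated child edges avoids the colour
  of the edge above v; when v is a root as well, the mark of u in the slot separates that edge
  from the child edges of v.
*)

lemma adjacent_sym: "adjacent H x y \<Longrightarrow> adjacent H y x"
  unfolding adjacent_def by (auto simp: insert_commute)

lemma reachable_sym: "(adjacent H)\<^sup>*\<^sup>* x y \<Longrightarrow> (adjacent H)\<^sup>*\<^sup>* y x"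
  using symp_rtranclp[OF sympI[OF adjacent_sym]] by (rule sympD)

lemma adjacent_in_vertices:
  assumes "simple_graph V H" "adjacent H x y"
  shows "x \<in> V" "y \<in> V"
  using assms unfolding simple_graph_def adjacent_def by (auto simp: doubleton_eq_iff)

lemma relpowp_parity:
  assumes cross: "\<And>x y. r x y \<Longrightarrow> (x \<in> A) \<noteq> (y \<in> A)" and "(r ^^ n) a b"
  shows "(a \<in> A \<longleftrightarrow> b \<in> A) \<longleftrightarrow> even n"
  using assms(2)
proof (induction n arbitrary: b)
  case 0
  then show ?case by simp
next
  case (Suc n)
  then obtain c where "(r ^^ n) a c" "r c b" by (blast elim: relpowp_Suc_E)
  with Suc.IH cross show ?case by fastforce
qed

lemma bipartite_walk_parity:
  assumes "bipartite V H" "(adjacent H ^^ m) a b" "(adjacent H ^^ n) a b"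
  shows "even m \<longleftrightarrow> even n"
proof -
  obtain A where "\<forall>e\<in>H. \<exists>x y. e = {x, y} \<and> x \<in> A \<and> y \<in> V - A"
    using assms(1) unfolding bipartite_def by blast
  then have "(x \<in> A) \<noteq> (y \<in> A)" if "adjacent H x y" for x y
    using that unfolding adjacent_def by (fastforce simp: doubleton_eq_iff)
  from relpowp_parity[OF this assms(2)] relpowp_parity[OF this assms(3)] show ?thesis by simp
qed

lemma component_edges_reachable:
  assumes "simple_graph V H" "e \<in> component_edges H v"
  obtains x y where "e = {x, y}" "x \<noteq> y" "(adjacent H)\<^sup>*\<^sup>* v x" "(adjacent H)\<^sup>*\<^sup>* v y"
proof -
  obtain u where "e \<in> H" "u \<in> e" "(adjacent H)\<^sup>*\<^sup>* v u"
    using assms(2) unfolding component_edges_def by blast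
  moreover obtain x y where "e = {x, y}" "x \<noteq> y"
    using assms(1) \<open>e \<in> H\<close> unfolding simple_graph_def by blast
  moreover have "adjacent H x y" "adjacent H y x"
    using calculation unfolding adjacent_def by (auto simp: insert_commute)
  ultimately have "(adjacent H)\<^sup>*\<^sup>* v x \<and> (adjacent H)\<^sup>*\<^sup>* v y"
    by (auto intro: rtranclp.rtrancl_into_rtrancl)
  with \<open>e = {x, y}\<close> \<open>x \<noteq> y\<close> that show ?thesis by blast
qed

definition branching :: "'a set set \<Rightarrow> 'a \<Rightarrow> bool" where
  "branching H r \<longleftrightarrow> (\<exists>a b. a \<noteq> b \<and> adjacent H r a \<and> adjacent H r b)"

lemma exists_reachable_branching:
  assumes "simple_graph V H" "2 \<le> card (component_edges H v)"
  shows "\<exists>r. (adjacent H)\<^sup>*\<^sup>* v r \<and> branching H r"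
proof (rule ccontr)
  assume none: "\<nexists>r. (adjacent H)\<^sup>*\<^sup>* v r \<and> branching H r"
  define w where "w = (SOME a. adjacent H v a)"
  have w: "u = w" if "adjacent H v u" for u
  proof -
    have "\<not> branching H v" using none by blast
    moreover have "adjacent H v w" unfolding w_def using that by (rule someI)
    ultimately show ?thesis using that unfolding branching_def by blast
  qed
  have near: "u = v \<or> adjacent H v u" if "(adjacent H)\<^sup>*\<^sup>* v u" for u
    using that
  proof (induction rule: rtranclp_induct)
    case base
    then show ?case by simp
  next
    case (step u z)
    from step.IH show ?case
    proof
      assume "adjacent H v u"
      then have "adjacent H u v" by (rule adjacent_sym)
      moreover have "\<not> branching H u" using none step.hyps(1) by blast
      ultimately have "z = v"
        using step.hyps(2) unfolding branching_def by blast
      then show ?thesis by simp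
    qed (use step.hyps in simp)
  qed
  then have reachable_in: "u \<in> {v, w}" if "(adjacent H)\<^sup>*\<^sup>* v u" for u
    using w that by blast
  have "component_edges H v \<subseteq> {{v, w}}"
  proof
    fix e assume "e \<in> component_edges H v"
    then obtain x y where "e = {x, y}" "x \<noteq> y"
      "(adjacent H)\<^sup>*\<^sup>* v x" "(adjacent H)\<^sup>*\<^sup>* v y"
      by (rule component_edges_reachable[OF assms(1)])
    moreover from this have "x \<in> {v, w}" "y \<in> {v, w}" using reachable_in by blast+
    ultimately show "e \<in> {{v, w}}" by auto
  qed
  then have "card (component_edges H v) \<le> 1"
    using card_mono[of "{{v, w}}"] by simp
  with assms(2) show False by simp
qed

lemma mod_3_succ_neq: "(n + 1) mod 3 \<noteq> n mod 3" "(n + 2) mod 3 \<noteq> n mod 3" for n :: nat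
  by presburger+

lemma mod_3_cycle: "a mod 3 = (b + 1) mod 3 \<Longrightarrow> b mod 3 \<noteq> (a + 1) mod 3" for a b :: nat
  by presburger

locale rooted_bipartite_graph =
  fixes V :: "'a set" and H :: "'a set set"
  assumes simple: "simple_graph V H" and bipartite: "bipartite V H"
    and component_size: "\<forall>v\<in>V. 2 \<le> card (component_edges H v)"
begin

abbreviation adj :: "'a \<Rightarrow> 'a \<Rightarrow> bool" where "adj \<equiv> adjacent H"

definition root :: "'a \<Rightarrow> 'a" where
  "root v = (SOME r. adj\<^sup>*\<^sup>* v r \<and> branching H r)"

definition depth :: "'a \<Rightarrow> nat" where
  "depth v = (LEAST n. (adj ^^ n) (root v) v)"

definition parent :: "'a \<Rightarrow> 'a" where
  "parent w = (SOME p. adj p w \<and> Suc (depth p) = depth w)"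

definition first_child :: "'a \<Rightarrow> 'a" where
  "first_child r = (SOME a. adj r a)"

definition second_child :: "'a \<Rightarrow> 'a" where
  "second_child r = (SOME b. adj r b \<and> b \<noteq> first_child r)"

lemma adj_in_V: "adj x y \<Longrightarrow> x \<in> V \<and> y \<in> V"
  using adjacent_in_vertices[OF simple] by blast

lemma root_reachable_branching: "v \<in> V \<Longrightarrow> adj\<^sup>*\<^sup>* v (root v) \<and> branching H (root v)"
  unfolding root_def using exists_reachable_branching[OF simple] component_size
  by (metis (no_types, lifting) someI_ex)

lemma root_eq: "adj\<^sup>*\<^sup>* v w \<Longrightarrow> root v = root w"
  unfolding root_def by (metis reachable_sym rtranclp_trans)

lemma depth_walk: "v \<in> V \<Longrightarrow> (adj ^^ depth v) (root v) v"
  unfolding depth_def using root_reachable_branching reachable_sym rtranclp_imp_relpowp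
  by (metis LeastI)

lemma depth_le: "(adj ^^ n) (root v) v \<Longrightarrow> depth v \<le> n"
  unfolding depth_def by (rule Least_le)

lemma depth_eq_0_iff: "v \<in> V \<Longrightarrow> depth v = 0 \<longleftrightarrow> root v = v"
  using depth_walk depth_le[of 0 v] by fastforce

lemma adj_depth:
  assumes "adj x y"
  shows "root x = root y \<and> (depth y = Suc (depth x) \<or> depth x = Suc (depth y))"
proof -
  have xy: "x \<in> V" "y \<in> V" using adj_in_V assms by auto
  have same_root: "root x = root y" using assms by (intro root_eq) auto
  have walk_x: "(adj ^^ depth x) (root x) x" and walk_y: "(adj ^^ depth y) (root x) y"
    using depth_walk xy same_root by metis+
  have "depth y \<le> Suc (depth x)"
    using depth_le relpowp_Suc_I[OF walk_x assms] same_root by metis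
  moreover have "depth x \<le> Suc (depth y)"
    using depth_le relpowp_Suc_I[OF walk_y adjacent_sym[OF assms]] by metis
  moreover have "even (depth y) \<longleftrightarrow> even (Suc (depth x))"
    using bipartite_walk_parity[OF bipartite walk_y relpowp_Suc_I[OF walk_x assms]] .
  ultimately show ?thesis using same_root by presburger
qed

lemma parent_adj_depth:
  assumes "w \<in> V" "0 < depth w"
  shows "adj (parent w) w \<and> Suc (depth (parent w)) = depth w"
proof -
  obtain n where n: "depth w = Suc n" using assms(2) gr0_implies_Suc by blast
  then obtain p where p: "(adj ^^ n) (root w) p" "adj p w"
    using depth_walk[OF assms(1)] by (auto elim: relpowp_Suc_E)
  then have "depth p \<le> n" using adj_depth depth_le by metis
  then have "Suc (depth p) = depth w" using adj_depth[OF p(2)] n by auto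
  with p(2) have "\<exists>p. adj p w \<and> Suc (depth p) = depth w" by blast
  then show ?thesis unfolding parent_def by (rule someI_ex)
qed

lemma tree_edge_in_H: "w \<in> V \<Longrightarrow> 0 < depth w \<Longrightarrow> {w, parent w} \<in> H"
  using parent_adj_depth unfolding adjacent_def by (simp add: insert_commute)

lemma root_child:
  assumes "r \<in> V" "depth r = 0" "adj r y"
  shows "depth y = 1 \<and> parent y = r"
proof -
  have y: "depth y = 1" "y \<in> V" using adj_depth[OF assms(3)] assms(2) adj_in_V[OF assms(3)] by auto
  then have "adj (parent y) y" "depth (parent y) = 0" using parent_adj_depth[of y] by auto
  then have "parent y = root y"
    using depth_eq_0_iff adj_in_V adj_depth by metis
  also have "root y = r" using adj_depth[OF assms(3)] depth_eq_0_iff assms(1,2) by simp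
  finally show ?thesis using y by simp
qed

lemma first_second_child:
  assumes "branching H r"
  shows "adj r (first_child r) \<and> adj r (second_child r) \<and> first_child r \<noteq> second_child r"
proof -
  obtain a b where "a \<noteq> b" "adj r a" "adj r b" using assms unfolding branching_def by blast
  then have "adj r (first_child r)" and "\<exists>b. adj r b \<and> b \<noteq> first_child r"
    unfolding first_child_def by (metis someI)+
  then show ?thesis unfolding second_child_def by (metis (mono_tags, lifting) someI_ex)
qed

end

locale rooted_bipartite_graph_matching = rooted_bipartite_graph +
  fixes M :: "'a set set"
  assumes matching: "matching M" and simple_M: "simple_graph V M" and disjoint: "H \<inter> M = {}"
begin

definition marked :: "'a \<Rightarrow> bool" where
  "marked x \<longleftrightarrow> (\<exists>e\<in>M. x = (SOME y. y \<in> e))"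

definition slot :: "'a \<Rightarrow> nat" where
  "slot w = (if 2 \<le> depth w then depth w mod 3
     else if w = first_child (parent w) then 3 + of_bool (marked (parent w))
     else if w = second_child (parent w) then 5 + of_bool (marked (parent w))
     else 7)"

definition colour :: "'a \<Rightarrow> nat" where
  "colour w = 2 * slot w + of_bool (marked w)"

definition colouring :: "'a set \<Rightarrow> nat option" where
  "colouring e = (if \<exists>w\<in>V. 0 < depth w \<and> e = {w, parent w}
     then Some (colour (THE w. w \<in> V \<and> 0 < depth w \<and> e = {w, parent w})) else None)"

lemma marked_matching_edge:
  assumes "{u, v} \<in> M" "u \<noteq> v"
  shows "marked u \<noteq> marked v"
proof -
  define s where "s = (SOME y. y \<in> {u, v})"
  have "s \<in> {u, v}" unfolding s_def by (rule someI[of _ u]) simp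
  have "marked x \<longleftrightarrow> x = s" if "x \<in> {u, v}" for x
  proof
    assume "marked x"
    then obtain e where e: "e \<in> M" "x = (SOME y. y \<in> e)" unfolding marked_def by blast
    moreover have "e \<noteq> {}" using simple_M e(1) unfolding simple_graph_def by blast
    ultimately have "x \<in> e" by (simp add: some_in_eq)
    with that have "e \<inter> {u, v} \<noteq> {}" by blast
    then have "e = {u, v}" using matching e(1) assms(1) unfolding matching_def by meson
    with e(2) show "x = s" unfolding s_def by simp
  next
    assume "x = s"
    with assms(1) show "marked x" unfolding marked_def s_def by blast
  qed
  with \<open>s \<in> {u, v}\<close> assms(2) show ?thesis by auto
qed

lemma colour_eq_iff: "colour w = colour z \<longleftrightarrow> slot w = slot z \<and> marked w = marked z"
  unfolding colour_def by (cases "marked w"; cases "marked z"; simp; presburger)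

lemma slot_less_8: "slot w < 8"
proof -
  have "depth w mod 3 < 3" by simp
  then show ?thesis unfolding slot_def by auto
qed

lemma colour_less_16: "colour w < 16"
  using slot_less_8[of w] unfolding colour_def by simp

lemma slot_deep_eq: "2 \<le> depth w \<Longrightarrow> slot w = depth w mod 3"
  unfolding slot_def by simp

lemma slot_deep_less: "2 \<le> depth w \<Longrightarrow> slot w < 3"
  unfolding slot_def by simp

lemma slot_depth_1_ge: "depth w = 1 \<Longrightarrow> 3 \<le> slot w"
  unfolding slot_def by simp

lemma slot_children:
  assumes "depth w = 1" "depth z = 1" "w \<noteq> z"
    and "z = first_child (parent z) \<or> z = second_child (parent z)"
    and "parent w = parent z \<or> marked (parent w) \<noteq> marked (parent z)"
  shows "slot w \<noteq> slot z"
  using assms unfolding slot_def by auto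

lemma tree_edge_unique:
  assumes "w \<in> V" "0 < depth w" "w' \<in> V" "0 < depth w'" "{w, parent w} = {w', parent w'}"
  shows "w' = w"
proof (rule ccontr)
  assume "w' \<noteq> w"
  with assms(5) have "w' = parent w" "parent w' = w" by (auto simp: doubleton_eq_iff)
  with parent_adj_depth[OF assms(1,2)] parent_adj_depth[OF assms(3,4)] show False by simp
qed

lemma colouring_tree_edge:
  assumes "w \<in> V" "0 < depth w"
  shows "colouring {w, parent w} = Some (colour w)"
proof -
  have "(THE w'. w' \<in> V \<and> 0 < depth w' \<and> {w, parent w} = {w', parent w'}) = w"
    using assms tree_edge_unique by (intro the_equality) auto
  with assms show ?thesis unfolding colouring_def by auto
qed

lemma colouring_SomeE:
  assumes "colouring e = Some \<alpha>"
  obtains w where "w \<in> V" "0 < depth w" "e = {w, parent w}" "\<alpha> = colour w"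
proof -
  from assms obtain w where w: "w \<in> V" "0 < depth w" "e = {w, parent w}"
    unfolding colouring_def by (auto split: if_splits)
  then have "colouring e = Some (colour w)" using colouring_tree_edge by simp
  with assms have "\<alpha> = colour w" by simp
  with w that show ?thesis by blast
qed

lemma partial_edge_colouring_16: "partial_edge_colouring E 16 colouring"
  unfolding partial_edge_colouring_def
proof (intro ballI allI impI)
  fix e \<alpha> assume "colouring e = Some \<alpha>"
  then show "\<alpha> < 16" by (rule colouring_SomeE) (simp add: colour_less_16)
qed

lemma satisfied_by_tree_edge:
  assumes "e \<in> H \<union> M" "z \<in> V" "0 < depth z" "{z, parent z} \<noteq> e" "{z, parent z} \<inter> e \<noteq> {}"
    and rivals: "\<And>w. w \<in> V \<Longrightarrow> 0 < depth w \<Longrightarrow> w \<noteq> z \<Longrightarrow> w \<in> e \<or> parent w \<in> e \<Longrightarrow>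
      colour w \<noteq> colour z"
  shows "satisfied (H \<union> M) colouring e"
  unfolding satisfied_def unique_colour_def
proof (intro exI bexI conjI ballI)
  show "{z, parent z} \<in> open_nbhd (H \<union> M) e"
    unfolding open_nbhd_def closed_nbhd_def using tree_edge_in_H assms(2-5) by auto
  show "colouring {z, parent z} = Some (colour z)"
    using colouring_tree_edge assms(2,3) .
  fix f assume f: "f \<in> closed_nbhd (H \<union> M) e - {{z, parent z}}"
  show "colouring f \<noteq> Some (colour z)"
  proof
    assume "colouring f = Some (colour z)"
    then obtain w where "w \<in> V" "0 < depth w" "f = {w, parent w}" "colour z = colour w"
      by (rule colouring_SomeE)
    with f rivals show False unfolding closed_nbhd_def by auto
  qed
qed

lemma satisfied_H_edge_inner:
  assumes "adj x y" "depth y = Suc (depth x)" "0 < depth x"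
  shows "satisfied (H \<union> M) colouring {x, y}"
proof -
  have x: "x \<in> V" "adj (parent x) x" "Suc (depth (parent x)) = depth x"
    using adj_in_V parent_adj_depth assms by auto
  show ?thesis
  proof (rule satisfied_by_tree_edge)
    show "{x, parent x} \<noteq> {x, y}"
      using x assms(2) adj_in_V by (auto simp: doubleton_eq_iff)
    fix w assume w: "w \<in> V" "0 < depth w" "w \<noteq> x" "w \<in> {x, y} \<or> parent w \<in> {x, y}"
    then have dw: "depth w = depth x + 1 \<or> depth w = depth x + 2"
      using parent_adj_depth[OF w(1,2)] assms(2) by auto
    then have "2 \<le> depth w" using assms(3) by auto
    have "slot w \<noteq> slot x"
    proof (cases "depth x = 1")
      case True
      then show ?thesis using slot_depth_1_ge[of x] slot_deep_less[OF \<open>2 \<le> depth w\<close>] by simp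
    next
      case False
      with assms(3) have "2 \<le> depth x" by simp
      with \<open>2 \<le> depth w\<close> dw mod_3_succ_neq show ?thesis by (auto simp: slot_deep_eq)
    qed
    then show "colour w \<noteq> colour x" by (simp add: colour_eq_iff)
  qed (use assms x tree_edge_in_H in \<open>auto simp: adjacent_def\<close>)
qed

lemma satisfied_H_edge_at_root:
  assumes "adj x y" "depth x = 0"
  shows "satisfied (H \<union> M) colouring {x, y}"
proof -
  have x: "x \<in> V" "root x = x" using assms adj_in_V depth_eq_0_iff by auto
  have child: "depth c = 1 \<and> parent c = x" if "adj x c" for c
    using root_child x(1) assms(2) that .
  have "adj x (first_child x)" "adj x (second_child x)" "first_child x \<noteq> second_child x"
    using first_second_child root_reachable_branching[OF x(1)] x(2) by auto
  moreover define z where "z = (if y = first_child x then second_child x else first_child x)"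
  ultimately have z: "adj x z" "z \<noteq> y" "z = first_child x \<or> z = second_child x"
    by auto
  have z_child: "depth z = 1" "parent z = x" using child[OF z(1)] by auto
  show ?thesis
  proof (rule satisfied_by_tree_edge)
    fix w assume w: "w \<in> V" "0 < depth w" "w \<noteq> z" "w \<in> {x, y} \<or> parent w \<in> {x, y}"
    have "depth w = 2 \<or> parent w = x"
      using w child[OF assms(1)] parent_adj_depth[OF w(1,2)] assms(2) by auto
    then have "slot w \<noteq> slot z"
    proof
      assume "depth w = 2"
      then show ?thesis using slot_deep_less[of w] slot_depth_1_ge[OF z_child(1)] by simp
    next
      assume "parent w = x"
      then have "depth w = 1" using parent_adj_depth[OF w(1,2)] assms(2) by simp
      with \<open>parent w = x\<close> show ?thesis using slot_children z z_child w(3) by simp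
    qed
    then show "colour w \<noteq> colour z" by (simp add: colour_eq_iff)
  qed (use assms z z_child adj_in_V in \<open>auto simp: adjacent_def doubleton_eq_iff\<close>)
qed

lemma satisfied_H_edge:
  assumes "e \<in> H"
  shows "satisfied (H \<union> M) colouring e"
proof -
  obtain x y where "e = {x, y}" "adj x y" "depth y = Suc (depth x)"
  proof -
    obtain x y where "e = {x, y}" "x \<noteq> y"
      using simple assms unfolding simple_graph_def by blast
    then have "adj x y" "adj y x" "{y, x} = e"
      using assms unfolding adjacent_def by (auto simp: insert_commute)
    moreover from adj_depth[OF \<open>adj x y\<close>]
    have "depth y = Suc (depth x) \<or> depth x = Suc (depth y)" by blast
    ultimately show thesis using that \<open>e = {x, y}\<close> by blast
  qed
  then show ?thesis
    using satisfied_H_edge_inner satisfied_H_edge_at_root by (cases "depth x") auto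
qed

lemma matching_edge_in_V: "{u, v} \<in> M \<Longrightarrow> u \<in> V \<and> v \<in> V"
  using simple_M unfolding simple_graph_def by (auto simp: doubleton_eq_iff)

lemma tree_edge_not_in_M: "w \<in> V \<Longrightarrow> 0 < depth w \<Longrightarrow> {w, parent w} \<notin> M"
  using tree_edge_in_H disjoint by blast

lemma satisfied_M_edge_at_root:
  assumes "{u, v} \<in> M" "u \<noteq> v" "depth u = 0"
  shows "satisfied (H \<union> M) colouring {u, v}"
proof -
  have u: "u \<in> V" "root u = u" using matching_edge_in_V assms depth_eq_0_iff by auto
  have child: "depth c = 1 \<and> parent c = u" if "adj u c" for c
    using root_child u(1) assms(3) that .
  have designated: "adj u (first_child u)" "adj u (second_child u)"
    "first_child u \<noteq> second_child u"
    using first_second_child root_reachable_branching[OF u(1)] u(2) by auto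
  define z where "z = (if colour v = colour (first_child u) then second_child u else first_child u)"
  have z: "adj u z" "z = first_child u \<or> z = second_child u"
    using designated by (auto simp: z_def)
  have z_child: "depth z = 1" "parent z = u" using child[OF z(1)] by auto
  have z_V: "z \<in> V" using adj_in_V z(1) by blast
  have "colour v \<noteq> colour z"
  proof (cases "colour v = colour (first_child u)")
    case True
    have "slot (first_child u) \<noteq> slot (second_child u)"
      using slot_children child designated by simp
    with True show ?thesis by (simp add: z_def colour_eq_iff)
  qed (simp add: z_def)
  have marks: "marked u \<noteq> marked v" using marked_matching_edge assms(1,2) .
  show ?thesis
  proof (rule satisfied_by_tree_edge)
    fix w assume w: "w \<in> V" "0 < depth w" "w \<noteq> z" "w \<in> {u, v} \<or> parent w \<in> {u, v}"
    have "w = v \<or> parent w = u \<or> parent w = v" using w assms(3) by auto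
    then show "colour w \<noteq> colour z"
    proof (elim disjE)
      assume "w = v"
      with \<open>colour v \<noteq> colour z\<close> show ?thesis by simp
    next
      assume "parent w = u"
      then have "depth w = 1" using parent_adj_depth[OF w(1,2)] assms(3) by simp
      with \<open>parent w = u\<close> have "slot w \<noteq> slot z" using slot_children z z_child w(3) by simp
      then show ?thesis by (simp add: colour_eq_iff)
    next
      assume "parent w = v"
      have "slot w \<noteq> slot z"
      proof (cases "depth v = 0")
        case True
        then have "depth w = 1" using parent_adj_depth[OF w(1,2)] \<open>parent w = v\<close> by simp
        with \<open>parent w = v\<close> show ?thesis using slot_children z z_child w(3) marks by simp
      next
        case False
        then have "2 \<le> depth w" using parent_adj_depth[OF w(1,2)] \<open>parent w = v\<close> by simp
        then show ?thesis using slot_deep_less[of w] slot_depth_1_ge[OF z_child(1)] by simp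
      qed
      then show ?thesis by (simp add: colour_eq_iff)
    qed
  qed (use assms(1) z_child tree_edge_not_in_M[OF z_V] z_V in auto)
qed

lemma satisfied_M_edge_inner:
  assumes "{u, v} \<in> M" "u \<noteq> v" "0 < depth u" "0 < depth v"
    and "depth u = 1 \<or> depth u mod 3 \<noteq> (depth v + 1) mod 3"
  shows "satisfied (H \<union> M) colouring {u, v}"
proof -
  have uv: "u \<in> V" "v \<in> V" using matching_edge_in_V assms(1) by auto
  show ?thesis
  proof (rule satisfied_by_tree_edge)
    fix w assume w: "w \<in> V" "0 < depth w" "w \<noteq> u" "w \<in> {u, v} \<or> parent w \<in> {u, v}"
    show "colour w \<noteq> colour u"
    proof (cases "w = v")
      case True
      then show ?thesis using marked_matching_edge[OF assms(1,2)] by (simp add: colour_eq_iff)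
    next
      case False
      with w have dw: "depth w = depth u + 1 \<or> depth w = depth v + 1"
        using parent_adj_depth[OF w(1,2)] by auto
      then have "2 \<le> depth w" using assms(3,4) by auto
      have "slot w \<noteq> slot u"
      proof (cases "depth u = 1")
        case True
        then show ?thesis using slot_depth_1_ge[of u] slot_deep_less[OF \<open>2 \<le> depth w\<close>] by simp
      next
        case False
        with assms(3,5) have "2 \<le> depth u" "depth u mod 3 \<noteq> (depth v + 1) mod 3" by auto
        with \<open>2 \<le> depth w\<close> dw mod_3_succ_neq show ?thesis by (auto simp: slot_deep_eq)
      qed
      then show ?thesis by (simp add: colour_eq_iff)
    qed
  qed (use assms(1,3) uv tree_edge_not_in_M[OF uv(1) assms(3)] in auto)
qed

lemma satisfied_M_edge:
  assumes "e \<in> M"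
  shows "satisfied (H \<union> M) colouring e"
proof -
  obtain u v where e: "e = {u, v}" "u \<noteq> v"
    using simple_M assms unfolding simple_graph_def by blast
  then have uv: "{u, v} \<in> M" and vu: "{v, u} \<in> M" "{v, u} = e"
    using assms by (auto simp: insert_commute)
  consider "depth u = 0" | "depth v = 0"
    | "0 < depth u" "0 < depth v" "depth u = 1 \<or> depth u mod 3 \<noteq> (depth v + 1) mod 3"
    | "0 < depth u" "0 < depth v" "depth v = 1 \<or> depth v mod 3 \<noteq> (depth u + 1) mod 3"
    using mod_3_cycle[of "depth u" "depth v"] by blast
  then show ?thesis
  proof cases
    case 1
    then show ?thesis using satisfied_M_edge_at_root[OF uv e(2)] e(1) by simp
  next
    case 2
    then show ?thesis using satisfied_M_edge_at_root[OF vu(1) e(2)[symmetric]] vu(2) by simp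
  next
    case 3
    then show ?thesis using satisfied_M_edge_inner[OF uv e(2)] e(1) by simp
  next
    case 4
    then show ?thesis using satisfied_M_edge_inner[OF vu(1) e(2)[symmetric]] vu(2) by simp
  qed
qed

end

theorem mainTheorem8:
  fixes V :: "'a set" and E H M :: "'a set set"
  assumes "simple_graph V E"
    and "H \<subseteq> E" and "simple_graph V H" and "bipartite V H"
    and "\<forall>v\<in>V. card (component_edges H v) \<ge> 2"
    and "matching M" and "M \<subseteq> E"
    and "E = H \<union> M" and "H \<inter> M = {}"
  shows "\<exists>c. partial_edge_colouring E 16 c \<and> (\<forall>e\<in>E. satisfied E c e)"
proof -
  have "simple_graph V M"
    using assms(1,7) unfolding simple_graph_def by blast
  then interpret rooted_bipartite_graph_matching V H M
    using assms by unfold_locales auto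
  have "\<forall>e\<in>E. satisfied E colouring e"
    using satisfied_H_edge satisfied_M_edge assms(8) by blast
  with partial_edge_colouring_16 show ?thesis by blast
qed

end
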